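(* Let $c\ge 0$ be a budget. Consider the primal problem $$\max_{w,\lambda_2,\mu}\ \lambda_2\quad\text{s.t.}\quad \sum_{\{i,j\}\in E_3}w_{ij}L_{ij}+L_0+\mu\boldsymbol e\boldsymbol e^T-\lambda_2 I\succeq 0,\ \ \sum_{\{i,j\}\in E_3}w_{ij}=c,\ \ w_{ij}\ge 0,$$ and the dual problem $$\max_{\xi\in\mathbb{R},\,X\in\mathbb{R}^{n\times n}}\ c\xi-\langle X,L_0\rangle\quad\text{s.t.}\quad \langle X,I\rangle=1,\ \ \langle X,\boldsymbol e\boldsymbol e^T\rangle=0,\ \ \langle X,L_{ij}\rangle\le-\xi\ \ \forall\{i,j\}\in E_3,\ \ X\succeq 0.$$ Then strong duality holds (the two optimal values are equal and finite), and the dual problem attains its optimal value.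
   Context: A multiplex network consists of two layers $G_1=(V_1,E_1)$ and $G_2=(V_2,E_2)$, simple undirected graphs with $|V_1|=|V_2|=N$; the vertices of $G_1$ are numbered $1,\dots,N$ and those of $G_2$ are numbered $N+1,\dots,2N$, and $n=2N$. The interlayer edges form the perfect matching $E_3=\{\{i,N+i\}:i=1,\dots,N\}$, carrying nonnegative weights $w_{ij}$. For an edge $\{i,j\}$ let $L_{ij}=(\delta_i-\delta_j)(\delta_i-\delta_j)^T$, $\delta_i$ the $i$-th standard basis vector of $\mathbb{R}^n$. $L_0=\sum_{\{i,j\}\in E_1\cup E_2}L_{ij}$. $\boldsymbol e$ is the all-ones vector in $\mathbb{R}^n$, $\langle A,B\rangle=\operatorname{Tr}(A^TB)$. *)

theory Defs
  imports Complex_Main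
begin

text \<open>Real n-by-n matrices are represented as functions nat => nat => real,
  indexed by 1..n (only entries with indices in 1..n are relevant).\<close>

definition delta :: "nat \<Rightarrow> nat \<Rightarrow> real" where
  "delta i a = (if a = i then 1 else 0)"

definition Lij :: "nat \<Rightarrow> nat \<Rightarrow> nat \<Rightarrow> nat \<Rightarrow> real" where
  "Lij i j = (\<lambda>a b. (delta i a - delta j a) * (delta i b - delta j b))"

text \<open>Undirected edges {i,j} are stored as pairs (i,j) with i < j.\<close>
definition L0 :: "(nat \<times> nat) set \<Rightarrow> (nat \<times> nat) set \<Rightarrow> nat \<Rightarrow> nat \<Rightarrow> real" where
  "L0 E1 E2 = (\<lambda>a b. \<Sum>(i, j)\<in>E1 \<union> E2. Lij i j a b)"

definition ones_mat :: "nat \<Rightarrow> nat \<Rightarrow> real" where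
  "ones_mat = (\<lambda>a b. 1)"

definition id_mat :: "nat \<Rightarrow> nat \<Rightarrow> real" where
  "id_mat = (\<lambda>a b. if a = b then 1 else 0)"

definition inner_mat :: "nat \<Rightarrow> (nat \<Rightarrow> nat \<Rightarrow> real) \<Rightarrow> (nat \<Rightarrow> nat \<Rightarrow> real) \<Rightarrow> real" where
  "inner_mat n A B = (\<Sum>a\<in>{1..n}. \<Sum>b\<in>{1..n}. A a b * B a b)"

definition psd :: "nat \<Rightarrow> (nat \<Rightarrow> nat \<Rightarrow> real) \<Rightarrow> bool" where
  "psd n A \<longleftrightarrow> (\<forall>a\<in>{1..n}. \<forall>b\<in>{1..n}. A a b = A b a) \<and>
     (\<forall>x :: nat \<Rightarrow> real. 0 \<le> (\<Sum>a\<in>{1..n}. \<Sum>b\<in>{1..n}. x a * A a b * x b))"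

text \<open>Primal feasibility; w i is the weight of the interlayer edge {i, N+i}.\<close>
definition primal_feasible ::
  "nat \<Rightarrow> (nat \<times> nat) set \<Rightarrow> (nat \<times> nat) set \<Rightarrow> real \<Rightarrow> (nat \<Rightarrow> real) \<Rightarrow> real \<Rightarrow> real \<Rightarrow> bool" where
  "primal_feasible N E1 E2 c w lam mu \<longleftrightarrow>
     psd (2 * N) (\<lambda>a b. (\<Sum>i\<in>{1..N}. w i * Lij i (N + i) a b) + L0 E1 E2 a b
                        + mu * ones_mat a b - lam * id_mat a b) \<and>
     (\<Sum>i\<in>{1..N}. w i) = c \<and> (\<forall>i\<in>{1..N}. 0 \<le> w i)"

definition dual_feasible ::
  "nat \<Rightarrow> real \<Rightarrow> (nat \<Rightarrow> nat \<Rightarrow> real) \<Rightarrow> bool" where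
  "dual_feasible N xi X \<longleftrightarrow>
     inner_mat (2 * N) X id_mat = 1 \<and> inner_mat (2 * N) X ones_mat = 0 \<and>
     (\<forall>i\<in>{1..N}. inner_mat (2 * N) X (Lij i (N + i)) \<le> - xi) \<and> psd (2 * N) X"

definition dual_obj ::
  "nat \<Rightarrow> (nat \<times> nat) set \<Rightarrow> (nat \<times> nat) set \<Rightarrow> real \<Rightarrow> real \<Rightarrow> (nat \<Rightarrow> nat \<Rightarrow> real) \<Rightarrow> real" where
  "dual_obj N E1 E2 c xi X = c * xi - inner_mat (2 * N) X (L0 E1 E2)"

end

theory Submission
  imports Defs "HOL-Analysis.Analysis"
begin

text \<open>Weak duality is \<open>\<langle>X, M\<rangle> \<ge> 0\<close> for positive semidefinite \<open>X\<close> and \<open>M\<close>, obtained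
  by peeling rank-one pieces off \<open>X\<close> with symmetric Gaussian elimination.

  For the converse write \<open>L\<^sub>i\<close> for the interlayer Laplacian \<open>Lij i (N + i)\<close>. The dual
  matrices \<open>X\<close> form a compact convex set \<open>K\<close>, and optimising the dual objective over \<open>\<xi>\<close>
  turns it into \<open>-h(X)\<close> with \<open>h(X) = \<langle>X, L\<^sub>0\<rangle> + c max\<^sub>i \<langle>X, L\<^sub>i\<rangle>\<close> continuous; so \<open>h\<close>
  attains its minimum \<open>p\<close> on \<open>K\<close>, giving an optimal dual solution of value \<open>-p\<close>. Since \<open>h\<close>
  is a maximum of finitely many affine functions, a minimax argument gives, for each
  \<open>\<epsilon> > 0\<close>, weights \<open>a\<^sub>i \<ge> 0\<close> summing to 1 with \<open>\<langle>X, L\<^sub>0 + c \<Sum> a\<^sub>i L\<^sub>i\<rangle> \<ge> p - \<epsilon>\<close> on \<open>K\<close>.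
  Taking \<open>X = y y\<^sup>T / |y|\<^sup>2\<close> shows that the weighted Laplacian \<open>L\<^sub>w\<close>, \<open>w = c a\<close>, has Rayleigh
  quotient at least \<open>\<lambda> = p - \<epsilon>\<close> on vectors orthogonal to \<open>e\<close>; as \<open>L\<^sub>w e = 0\<close>, the matrix
  \<open>L\<^sub>w + |\<lambda>| e e\<^sup>T - \<lambda> I\<close> is positive semidefinite, so \<open>\<lambda>\<close> is primal feasible.\<close>

lemma sum_delta_mult: "finite S \<Longrightarrow> k \<in> S \<Longrightarrow> (\<Sum>a\<in>S. delta k a * f a) = f k"
  by (simp add: delta_def if_distrib[of "\<lambda>u. u * _"] cong: if_cong)

lemma sum_mult_delta: "finite S \<Longrightarrow> k \<in> S \<Longrightarrow> (\<Sum>a\<in>S. f a * delta k a) = f k"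
  by (simp add: delta_def if_distrib[of "\<lambda>u. _ * u"] cong: if_cong)

definition quad_form :: "nat set \<Rightarrow> (nat \<Rightarrow> nat \<Rightarrow> real) \<Rightarrow> (nat \<Rightarrow> real) \<Rightarrow> real" where
  "quad_form S A x = (\<Sum>a\<in>S. \<Sum>b\<in>S. x a * A a b * x b)"

definition psd_on :: "nat set \<Rightarrow> (nat \<Rightarrow> nat \<Rightarrow> real) \<Rightarrow> bool" where
  "psd_on S A \<longleftrightarrow> (\<forall>a\<in>S. \<forall>b\<in>S. A a b = A b a) \<and> (\<forall>x. 0 \<le> quad_form S A x)"

lemma psd_eq_psd_on: "psd n A \<longleftrightarrow> psd_on {1..n} A"
  by (simp add: psd_def psd_on_def quad_form_def)

lemma quad_form_restrict:
  assumes "finite S" "T \<subseteq> S"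
  shows "quad_form S A (\<lambda>a. if a \<in> T then x a else 0) = quad_form T A x"
proof -
  have restrict: "(\<Sum>a\<in>S. if a \<in> T then f a else 0) = sum f T" for f :: "nat \<Rightarrow> real"
    using assms sum.inter_restrict[of S f T] by (simp add: Int_absorb1)
  show ?thesis
    unfolding quad_form_def restrict[symmetric]
    by (intro sum.cong) (auto simp: restrict[symmetric] intro!: sum.cong)
qed

lemma psd_on_subset: "psd_on S A \<Longrightarrow> finite S \<Longrightarrow> T \<subseteq> S \<Longrightarrow> psd_on T A"
  unfolding psd_on_def by (metis quad_form_restrict subsetD)

lemma quad_form_delta: "finite S \<Longrightarrow> k \<in> S \<Longrightarrow> quad_form S A (delta k) = A k k"
  by (simp add: quad_form_def sum_delta_mult sum_mult_delta mult.assoc sum_distrib_left[symmetric])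

lemma quad_form_add_scaled:
  "quad_form S A (\<lambda>a. x a + t * y a) = quad_form S A x
     + t * ((\<Sum>a\<in>S. \<Sum>b\<in>S. x a * A a b * y b) + (\<Sum>a\<in>S. \<Sum>b\<in>S. y a * A a b * x b))
     + t\<^sup>2 * quad_form S A y"
  by (simp add: quad_form_def algebra_simps sum.distrib sum_distrib_left power2_eq_square)

lemma quadratic_nonneg_imp_discriminant:
  fixes q B d :: real
  assumes nonneg: "\<And>t. 0 \<le> q + 2 * t * B + t\<^sup>2 * d" and "0 \<le> d"
  shows "B\<^sup>2 \<le> d * q"
proof (cases "d = 0")
  case True
  have "0 \<le> q" using nonneg[of 0] by simp
  moreover have "B = 0"
  proof (rule ccontr)
    assume "B \<noteq> 0"
    with nonneg[of "- (q + 1) / (2 * B)"] True show False by (simp add: field_simps)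
  qed
  ultimately show ?thesis using True by simp
next
  case False
  with \<open>0 \<le> d\<close> have "0 < d" by simp
  with nonneg[of "- B / d"] show ?thesis by (simp add: power2_eq_square field_simps)
qed

lemma psd_on_quad_form_nonneg: "psd_on S X \<Longrightarrow> 0 \<le> quad_form S X x"
  by (simp add: psd_on_def)

lemma psd_on_diag_nonneg:
  assumes "psd_on S X" "finite S" "k \<in> S"
  shows "0 \<le> X k k"
  using psd_on_quad_form_nonneg[OF assms(1), of "delta k"] by (simp add: quad_form_delta assms(2,3))

lemma psd_on_cauchy_schwarz:
  assumes "psd_on S X" "finite S" "k \<in> S"
  shows "(\<Sum>a\<in>S. y a * X a k)\<^sup>2 \<le> X k k * quad_form S X y"
proof -
  define B where "B = (\<Sum>a\<in>S. y a * X a k)"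
  have sym: "\<And>a. a \<in> S \<Longrightarrow> X k a = X a k" using assms(1,3) by (simp add: psd_on_def)
  have cross1: "(\<Sum>a\<in>S. \<Sum>b\<in>S. y a * X a b * delta k b) = B"
    using assms(2,3) by (simp add: B_def sum_mult_delta)
  have "(\<Sum>a\<in>S. \<Sum>b\<in>S. delta k a * X a b * y b) = (\<Sum>b\<in>S. \<Sum>a\<in>S. delta k a * (X a b * y b))"
    by (subst sum.swap) (simp add: mult.assoc)
  also have "\<dots> = B"
    unfolding B_def using assms(2,3) sym by (intro sum.cong) (auto simp: sum_delta_mult)
  finally have cross2: "(\<Sum>a\<in>S. \<Sum>b\<in>S. delta k a * X a b * y b) = B" .
  have "0 \<le> quad_form S X y + 2 * t * B + t\<^sup>2 * X k k" for t
    using psd_on_quad_form_nonneg[OF assms(1), of "\<lambda>a. y a + t * delta k a"]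
    unfolding quad_form_add_scaled cross1 cross2 quad_form_delta[OF assms(2,3)] by simp
  then show ?thesis unfolding B_def
    by (rule quadratic_nonneg_imp_discriminant) (rule psd_on_diag_nonneg[OF assms])
qed

lemma psd_on_entry_sq_le:
  assumes "psd_on S X" "finite S" "a \<in> S" "b \<in> S"
  shows "(X a b)\<^sup>2 \<le> X a a * X b b"
proof -
  have "(\<Sum>c\<in>S. delta a c * X c b) = X a b" using assms(2,3) by (rule sum_delta_mult)
  with psd_on_cauchy_schwarz[OF assms(1,2,4), of "delta a"] show ?thesis
    using assms(2,3) by (simp add: quad_form_delta mult.commute)
qed

text \<open>For a zero pivot the
  division yields \<open>0\<close>, so the step does nothing; the \<open>k\<close>-th row of a PSD matrix then
  vanishes anyway.\<close>

definition schur_step :: "(nat \<Rightarrow> nat \<Rightarrow> real) \<Rightarrow> nat \<Rightarrow> nat \<Rightarrow> nat \<Rightarrow> real" where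
  "schur_step X k = (\<lambda>a b. X a b - X a k * X b k / X k k)"

lemma quad_form_schur_step:
  "quad_form S (schur_step X k) y = quad_form S X y - (\<Sum>a\<in>S. y a * X a k)\<^sup>2 / X k k"
  by (simp add: quad_form_def schur_step_def algebra_simps sum_subtractf power2_eq_square
      sum_product sum_divide_distrib)

lemma psd_on_schur_step:
  assumes "psd_on S X" "finite S" "k \<in> S"
  shows "psd_on S (schur_step X k)"
  unfolding psd_on_def
proof (intro conjI ballI allI)
  fix a b assume "a \<in> S" "b \<in> S"
  then show "schur_step X k a b = schur_step X k b a"
    using assms(1) by (simp add: psd_on_def schur_step_def)
next
  fix y
  have "(\<Sum>a\<in>S. y a * X a k)\<^sup>2 / X k k \<le> quad_form S X y"
  proof (cases "X k k = 0")
    case True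
    then show ?thesis using psd_on_quad_form_nonneg[OF assms(1)] by simp
  next
    case False
    then have "0 < X k k" using psd_on_diag_nonneg[OF assms] by simp
    with psd_on_cauchy_schwarz[OF assms, of y] show ?thesis
      by (simp add: divide_le_eq mult.commute)
  qed
  then show "0 \<le> quad_form S (schur_step X k) y" unfolding quad_form_schur_step by simp
qed

lemma schur_step_pivot_row_col:
  assumes "psd_on S X" "finite S" "k \<in> S" "a \<in> S"
  shows "schur_step X k a k = 0" "schur_step X k k a = 0"
proof -
  have sym: "X k a = X a k" using assms(1,3,4) by (simp add: psd_on_def)
  have "X a k = 0" if "X k k = 0"
    using psd_on_entry_sq_le[OF assms(1,2,4,3)] that by simp
  then show "schur_step X k a k = 0" "schur_step X k k a = 0"
    using sym by (auto simp: schur_step_def)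
qed

lemma frobenius_schur_step:
  "(\<Sum>a\<in>S. \<Sum>b\<in>S. X a b * M a b)
     = (\<Sum>a\<in>S. \<Sum>b\<in>S. schur_step X k a b * M a b) + quad_form S M (\<lambda>a. X a k) / X k k"
  by (simp add: schur_step_def quad_form_def algebra_simps sum.distrib sum_subtractf
      sum_divide_distrib)

lemma psd_frobenius_nonneg:
  assumes "finite S" "psd_on S X" "\<And>x. 0 \<le> quad_form S M x"
  shows "0 \<le> (\<Sum>a\<in>S. \<Sum>b\<in>S. X a b * M a b)"
  using assms
proof (induction S arbitrary: X rule: finite_induct)
  case empty
  then show ?case by simp
next
  case (insert k T)
  let ?Y = "schur_step X k"
  have psd_Y: "psd_on (insert k T) ?Y"
    using psd_on_schur_step[OF insert.prems(1)] insert.hyps(1) by simp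
  have M_T: "0 \<le> quad_form T M x" for x
    using insert.prems(2) quad_form_restrict[of "insert k T" T M x] insert.hyps(1)
    by (metis finite_insert subset_insertI)
  have "(\<Sum>a\<in>insert k T. \<Sum>b\<in>insert k T. ?Y a b * M a b) = (\<Sum>a\<in>T. \<Sum>b\<in>T. ?Y a b * M a b)"
    using schur_step_pivot_row_col[OF insert.prems(1)] insert.hyps by simp
  also have "0 \<le> \<dots>"
    using insert.IH[OF psd_on_subset[OF psd_Y] M_T] insert.hyps(1) by auto
  finally have "0 \<le> (\<Sum>a\<in>insert k T. \<Sum>b\<in>insert k T. ?Y a b * M a b)" .
  moreover have "0 \<le> quad_form (insert k T) M (\<lambda>a. X a k) / X k k"
    using insert.prems psd_on_diag_nonneg[OF insert.prems(1)] insert.hyps(1) by simp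
  ultimately show ?case by (subst frobenius_schur_step[of _ _ _ k]) simp
qed

lemma inner_mat_add: "inner_mat n X (\<lambda>a b. A a b + B a b) = inner_mat n X A + inner_mat n X B"
  by (simp add: inner_mat_def algebra_simps sum.distrib)

lemma inner_mat_diff: "inner_mat n X (\<lambda>a b. A a b - B a b) = inner_mat n X A - inner_mat n X B"
  by (simp add: inner_mat_def algebra_simps sum_subtractf)

lemma inner_mat_scale: "inner_mat n X (\<lambda>a b. r * A a b) = r * inner_mat n X A"
  by (simp add: inner_mat_def algebra_simps sum_distrib_left)

lemma inner_mat_sum:
  "inner_mat n X (\<lambda>a b. \<Sum>i\<in>I. w i * A i a b) = (\<Sum>i\<in>I. w i * inner_mat n X (A i))"
  unfolding inner_mat_def
  by (simp add: sum_distrib_left algebra_simps sum.swap[of _ I "{1..n}"] sum.swap[of _ I])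

lemma inner_mat_comm: "inner_mat n X A = inner_mat n A X"
  by (simp add: inner_mat_def mult.commute)

lemma quad_form_eq_inner_mat: "quad_form {1..n} A x = inner_mat n (\<lambda>a b. x a * x b) A"
  by (simp add: quad_form_def inner_mat_def algebra_simps)

lemma psd_inner_mat_nonneg: "psd n X \<Longrightarrow> psd n M \<Longrightarrow> 0 \<le> inner_mat n X M"
  unfolding psd_eq_psd_on inner_mat_def by (rule psd_frobenius_nonneg) (auto simp: psd_on_def)

lemma weak_duality:
  assumes "primal_feasible N E1 E2 c w lam mu" "dual_feasible N xi X"
  shows "lam \<le> - dual_obj N E1 E2 c xi X"
proof -
  let ?L = "\<lambda>i. Lij i (N + i)"
  have "0 \<le> inner_mat (2 * N) X (\<lambda>a b. (\<Sum>i\<in>{1..N}. w i * ?L i a b) + L0 E1 E2 a b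
                        + mu * ones_mat a b - lam * id_mat a b)"
    using assms
    by (intro psd_inner_mat_nonneg) (simp_all add: primal_feasible_def dual_feasible_def)
  also have "\<dots> = (\<Sum>i\<in>{1..N}. w i * inner_mat (2 * N) X (?L i))
      + inner_mat (2 * N) X (L0 E1 E2) - lam"
    using assms(2)
    by (simp add: inner_mat_add inner_mat_diff inner_mat_scale inner_mat_sum dual_feasible_def)
  also have "(\<Sum>i\<in>{1..N}. w i * inner_mat (2 * N) X (?L i)) \<le> (\<Sum>i\<in>{1..N}. w i * - xi)"
    using assms
    by (intro sum_mono mult_left_mono) (auto simp: primal_feasible_def dual_feasible_def)
  also have "(\<Sum>i\<in>{1..N}. w i * - xi) = - c * xi"
    using assms(1) by (simp add: primal_feasible_def sum_negf flip: sum_distrib_right)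
  finally show ?thesis by (simp add: dual_obj_def)
qed

lemma inner_mat_id: "inner_mat n X id_mat = (\<Sum>a\<in>{1..n}. X a a)"
proof -
  have "id_mat a b = delta a b" for a b by (simp add: id_mat_def delta_def)
  then show ?thesis by (simp add: inner_mat_def sum_mult_delta)
qed

text \<open>Entries outside \<open>{1..n}\<close> are
  irrelevant to the problem and are fixed to \<open>0\<close>, which makes the set compact.\<close>

definition dual_spectrahedron :: "nat \<Rightarrow> (nat \<Rightarrow> nat \<Rightarrow> real) set" where
  "dual_spectrahedron n = {X. (\<forall>a b. a \<notin> {1..n} \<or> b \<notin> {1..n} \<longrightarrow> X a b = 0) \<and>
     inner_mat n X id_mat = 1 \<and> inner_mat n X ones_mat = 0 \<and> psd n X}"

lemma dual_spectrahedron_entry_bound: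
  assumes "X \<in> dual_spectrahedron n"
  shows "\<bar>X a b\<bar> \<le> 1"
proof (cases "a \<in> {1..n} \<and> b \<in> {1..n}")
  case True
  have psd: "psd_on {1..n} X" using assms by (simp add: dual_spectrahedron_def psd_eq_psd_on)
  have diag_le: "X c c \<le> 1" if "c \<in> {1..n}" for c
  proof -
    have "X c c \<le> (\<Sum>d\<in>{1..n}. X d d)"
      using that psd_on_diag_nonneg[OF psd] by (intro member_le_sum) auto
    also have "\<dots> = 1" using assms by (simp add: dual_spectrahedron_def inner_mat_id)
    finally show ?thesis .
  qed
  have "(X a b)\<^sup>2 \<le> X a a * X b b" using psd_on_entry_sq_le[OF psd] True by simp
  also have "\<dots> \<le> 1 * 1"
    using True diag_le psd_on_diag_nonneg[OF psd] by (intro mult_mono) auto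
  finally show ?thesis by (simp add: abs_square_le_1)
next
  case False
  then show ?thesis using assms by (auto simp: dual_spectrahedron_def)
qed

lemma continuous_on_entry [continuous_intros]:
  "continuous_on S (\<lambda>X :: nat \<Rightarrow> nat \<Rightarrow> real. X a b)"
  using continuous_on_product_then_coordinatewise[OF continuous_on_product_coordinates, of a b]
  by (rule continuous_on_subset) simp

lemma continuous_on_inner_mat [continuous_intros]: "continuous_on S (\<lambda>X. inner_mat n X A)"
  unfolding inner_mat_def by (intro continuous_intros)

lemma closed_Collect_const_imp: "closed {x. Q x} \<Longrightarrow> closed {x. P \<longrightarrow> Q x}"
  by (cases P) auto

lemma closed_dual_spectrahedron: "closed (dual_spectrahedron n)"
  unfolding dual_spectrahedron_def psd_def Ball_def
  by (intro closed_Collect_conj closed_Collect_all closed_Collect_const_imp closed_Collect_eq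
      closed_Collect_le continuous_intros)

lemma compact_entrywise_bounded: "compact {X :: nat \<Rightarrow> nat \<Rightarrow> real. \<forall>a b. \<bar>X a b\<bar> \<le> 1}"
proof -
  have box: "compact (PiE UNIV (\<lambda>_. K))" if "compact K" for K :: "'a::topological_space set"
    using compactin_PiE[of "\<lambda>_. euclidean" UNIV "\<lambda>_. K"] that
    unfolding euclidean_product_topology compactin_euclidean_iff by blast
  have "{X :: nat \<Rightarrow> nat \<Rightarrow> real. \<forall>a b. \<bar>X a b\<bar> \<le> 1}
      = PiE UNIV (\<lambda>_. PiE UNIV (\<lambda>_. {-1..1}))"
    by (auto simp: PiE_UNIV_domain Pi_iff abs_le_iff)
  then show ?thesis by (simp add: box)
qed

lemma compact_dual_spectrahedron: "compact (dual_spectrahedron n)"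
proof -
  have "dual_spectrahedron n = {X. \<forall>a b. \<bar>X a b\<bar> \<le> 1} \<inter> dual_spectrahedron n"
    using dual_spectrahedron_entry_bound by blast
  also have "compact \<dots>"
    using compact_entrywise_bounded closed_dual_spectrahedron by (rule compact_Int_closed)
  finally show ?thesis .
qed

definition mat_segment ::
  "(nat \<Rightarrow> nat \<Rightarrow> real) \<Rightarrow> (nat \<Rightarrow> nat \<Rightarrow> real) \<Rightarrow> real \<Rightarrow> nat \<Rightarrow> nat \<Rightarrow> real" where
  "mat_segment X Y t = (\<lambda>a b. (1 - t) * X a b + t * Y a b)"

lemma inner_mat_mat_segment:
  "inner_mat n (mat_segment X Y t) A = (1 - t) * inner_mat n X A + t * inner_mat n Y A"
  by (simp add: mat_segment_def inner_mat_comm[of n _ A] inner_mat_add inner_mat_scale)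

lemma quad_form_mat_segment:
  "quad_form S (mat_segment X Y t) x = (1 - t) * quad_form S X x + t * quad_form S Y x"
  by (simp add: mat_segment_def quad_form_def algebra_simps sum.distrib sum_distrib_left
      sum_subtractf)

lemma mat_segment_in_dual_spectrahedron:
  assumes "X \<in> dual_spectrahedron n" "Y \<in> dual_spectrahedron n" "0 \<le> t" "t \<le> 1"
  shows "mat_segment X Y t \<in> dual_spectrahedron n"
proof -
  have "psd_on {1..n} X" "psd_on {1..n} Y"
    using assms(1,2) by (simp_all add: dual_spectrahedron_def psd_eq_psd_on)
  then have "psd_on {1..n} (mat_segment X Y t)"
    using assms(3,4) unfolding psd_on_def quad_form_mat_segment
    by (auto simp: mat_segment_def)
  with assms(1,2) show ?thesis
    by (simp add: dual_spectrahedron_def psd_eq_psd_on inner_mat_mat_segment)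
      (simp add: mat_segment_def)
qed

lemma quad_form_add: "quad_form S (\<lambda>a b. A a b + B a b) x = quad_form S A x + quad_form S B x"
  by (simp add: quad_form_def algebra_simps sum.distrib)

lemma quad_form_diff: "quad_form S (\<lambda>a b. A a b - B a b) x = quad_form S A x - quad_form S B x"
  by (simp add: quad_form_def algebra_simps sum_subtractf)

lemma quad_form_scale: "quad_form S (\<lambda>a b. r * A a b) x = r * quad_form S A x"
  by (simp add: quad_form_def algebra_simps sum_distrib_left)

lemma quad_form_sum: "quad_form S (\<lambda>a b. \<Sum>i\<in>I. A i a b) x = (\<Sum>i\<in>I. quad_form S (A i) x)"
  unfolding quad_form_def
  by (simp add: sum_distrib_left sum_distrib_right algebra_simps sum.swap[of _ I])

lemma quad_form_outer: "quad_form S (\<lambda>a b. u a * u b) x = (\<Sum>a\<in>S. x a * u a)\<^sup>2"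
  by (simp add: quad_form_def power2_eq_square sum_product algebra_simps)

lemma quad_form_id: "quad_form {1..n} id_mat x = (\<Sum>a\<in>{1..n}. (x a)\<^sup>2)"
  unfolding quad_form_eq_inner_mat inner_mat_comm[of n _ id_mat] inner_mat_id
  by (simp add: power2_eq_square)

lemma quad_form_ones: "quad_form S ones_mat x = (\<Sum>a\<in>S. x a)\<^sup>2"
  using quad_form_outer[of S "\<lambda>_. 1" x] by (simp add: ones_mat_def)

lemma quad_form_Lij:
  assumes "i \<in> {1..n}" "j \<in> {1..n}"
  shows "quad_form {1..n} (Lij i j) x = (x i - x j)\<^sup>2"
  using quad_form_outer[of "{1..n}" "\<lambda>a. delta i a - delta j a" x] assms
  by (simp add: Lij_def right_diff_distrib sum_subtractf sum_mult_delta)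

definition rayleigh_mat :: "nat \<Rightarrow> (nat \<Rightarrow> real) \<Rightarrow> nat \<Rightarrow> nat \<Rightarrow> real" where
  "rayleigh_mat n y = (\<lambda>a b. if a \<in> {1..n} \<and> b \<in> {1..n}
     then y a * y b / (\<Sum>c\<in>{1..n}. (y c)\<^sup>2) else 0)"

lemma inner_rayleigh_mat:
  "inner_mat n (rayleigh_mat n y) A = quad_form {1..n} A y / (\<Sum>c\<in>{1..n}. (y c)\<^sup>2)"
  by (simp add: inner_mat_def rayleigh_mat_def quad_form_def sum_divide_distrib algebra_simps)

lemma rayleigh_mat_in_dual_spectrahedron:
  assumes "(\<Sum>a\<in>{1..n}. y a) = 0" "0 < (\<Sum>a\<in>{1..n}. (y a)\<^sup>2)"
  shows "rayleigh_mat n y \<in> dual_spectrahedron n"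
proof -
  have "quad_form {1..n} (rayleigh_mat n y) x = (\<Sum>a\<in>{1..n}. y a * x a)\<^sup>2 / (\<Sum>c\<in>{1..n}. (y c)\<^sup>2)"
    for x
    unfolding quad_form_eq_inner_mat inner_mat_comm[of n _ "rayleigh_mat n y"] inner_rayleigh_mat
    by (simp add: quad_form_eq_inner_mat[symmetric] quad_form_outer)
  then have "psd_on {1..n} (rayleigh_mat n y)"
    using assms(2) by (auto simp: psd_on_def rayleigh_mat_def mult.commute)
  moreover have "inner_mat n (rayleigh_mat n y) id_mat = 1"
    using assms(2) by (simp only: inner_rayleigh_mat quad_form_id) simp
  moreover have "inner_mat n (rayleigh_mat n y) ones_mat = 0"
    using assms(1) by (simp only: inner_rayleigh_mat quad_form_ones) simp
  ultimately show ?thesis by (simp add: dual_spectrahedron_def psd_eq_psd_on rayleigh_mat_def)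
qed

lemma dual_spectrahedron_nonempty:
  assumes "2 \<le> n"
  shows "dual_spectrahedron n \<noteq> {}"
proof -
  define y where "y a = delta 1 a - delta 2 a" for a
  have sum_delta: "(\<Sum>a\<in>{1..n}. delta k a) = 1" if "k \<in> {1..n}" for k
    using sum_delta_mult[of "{1..n}" k "\<lambda>_. 1"] that by simp
  have "(y a)\<^sup>2 = delta 1 a + delta 2 a" for a by (simp add: y_def delta_def)
  then have "(\<Sum>a\<in>{1..n}. y a) = 0" "(\<Sum>a\<in>{1..n}. (y a)\<^sup>2) = 2"
    using sum_delta[of 1] sum_delta[of 2] assms by (simp_all add: y_def sum_subtractf sum.distrib)
  then show ?thesis using rayleigh_mat_in_dual_spectrahedron[where n = n and y = y] by auto
qed

lemma rayleigh_bound_on_centered: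
  assumes bound: "\<forall>X\<in>dual_spectrahedron n. lam \<le> inner_mat n X A"
    and centered: "(\<Sum>a\<in>{1..n}. y a) = 0"
  shows "lam * (\<Sum>a\<in>{1..n}. (y a)\<^sup>2) \<le> quad_form {1..n} A y"
proof (cases "(\<Sum>a\<in>{1..n}. (y a)\<^sup>2) = 0")
  case True
  then have "\<forall>a\<in>{1..n}. y a = 0" by (simp add: sum_nonneg_eq_0_iff)
  then show ?thesis using True by (simp add: quad_form_def)
next
  case False
  then have pos: "0 < (\<Sum>a\<in>{1..n}. (y a)\<^sup>2)" by (simp add: less_le sum_nonneg)
  have "lam \<le> inner_mat n (rayleigh_mat n y) A"
    using bound rayleigh_mat_in_dual_spectrahedron[OF centered pos] by blast
  with pos show ?thesis by (simp add: inner_rayleigh_mat le_divide_eq mult.commute)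
qed

lemma psd_shift_by_ones:
  fixes A :: "nat \<Rightarrow> nat \<Rightarrow> real"
  assumes "1 \<le> n"
    and shift: "\<And>x \<alpha>. quad_form {1..n} A (\<lambda>a. x a - \<alpha>) = quad_form {1..n} A x"
    and centered: "\<And>y. (\<Sum>a\<in>{1..n}. y a) = 0 \<Longrightarrow> lam * (\<Sum>a\<in>{1..n}. (y a)\<^sup>2) \<le> quad_form {1..n} A y"
  shows "0 \<le> quad_form {1..n} (\<lambda>a b. A a b + \<bar>lam\<bar> * ones_mat a b - lam * id_mat a b) x"
proof -
  define s where "s = (\<Sum>a\<in>{1..n}. x a)"
  define y where "y a = x a - s / n" for a
  have n_pos: "0 < real n" using assms(1) by simp
  have "(\<Sum>a\<in>{1..n}. y a) = 0"
    using n_pos by (simp add: y_def s_def sum_subtractf)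
  then have "lam * (\<Sum>a\<in>{1..n}. (y a)\<^sup>2) \<le> quad_form {1..n} A y" by (rule centered)
  also have "quad_form {1..n} A y = quad_form {1..n} A x" unfolding y_def by (rule shift)
  finally have A_bound: "lam * (\<Sum>a\<in>{1..n}. (y a)\<^sup>2) \<le> quad_form {1..n} A x" .
  have "(\<Sum>a\<in>{1..n}. (y a)\<^sup>2) = (\<Sum>a\<in>{1..n}. (x a)\<^sup>2 - 2 * (s / n) * x a + (s / n)\<^sup>2)"
    by (simp add: y_def power2_diff algebra_simps)
  also have "\<dots> = (\<Sum>a\<in>{1..n}. (x a)\<^sup>2) - 2 * (s / n) * s + n * (s / n)\<^sup>2"
    by (simp add: s_def sum.distrib sum_subtractf sum_distrib_left)
  finally have norm_split: "(\<Sum>a\<in>{1..n}. (x a)\<^sup>2) = (\<Sum>a\<in>{1..n}. (y a)\<^sup>2) + s\<^sup>2 / n"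
    using n_pos by (simp add: power2_eq_square field_simps)
  have "lam / n \<le> \<bar>lam\<bar> / n" using n_pos by (simp add: divide_right_mono)
  also have "\<dots> \<le> \<bar>lam\<bar>" using assms(1) by (simp add: divide_le_eq mult_le_cancel_left1)
  finally have "0 \<le> s\<^sup>2 * (\<bar>lam\<bar> - lam / n)" by simp
  moreover have "quad_form {1..n} (\<lambda>a b. A a b + \<bar>lam\<bar> * ones_mat a b - lam * id_mat a b) x
      = (quad_form {1..n} A x - lam * (\<Sum>a\<in>{1..n}. (y a)\<^sup>2)) + s\<^sup>2 * (\<bar>lam\<bar> - lam / n)"
    unfolding quad_form_add quad_form_diff quad_form_scale quad_form_ones quad_form_id
      s_def[symmetric] norm_split
    by (simp add: algebra_simps)
  ultimately show ?thesis using A_bound by simp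
qed

lemma pos_part_square_le:
  fixes u h :: real
  shows "(max 0 (u + h))\<^sup>2 \<le> (max 0 u)\<^sup>2 + 2 * max 0 u * h + h\<^sup>2"
proof (cases "0 \<le> u")
  case True
  then have "(max 0 u)\<^sup>2 + 2 * max 0 u * h + h\<^sup>2 = (u + h)\<^sup>2" by (simp add: power2_sum)
  then show ?thesis by (simp add: max_def)
next
  case False
  then show ?thesis
    by (auto simp: max_def intro!: power_mono)
qed

lemma nonneg_if_nonneg_at_right:
  fixes D E :: real
  assumes "\<And>t. 0 < t \<Longrightarrow> t \<le> 1 \<Longrightarrow> 0 \<le> D + t * E"
  shows "0 \<le> D"
proof (rule tendsto_lowerbound)
  show "((\<lambda>t. D + t * E) \<longlongrightarrow> D) (at_right 0)"
    by (auto intro!: tendsto_eq_intros)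
  show "\<forall>\<^sub>F t in at_right 0. 0 \<le> D + t * E"
    using assms by (auto simp: eventually_at_right_field intro!: exI[of _ 1])
qed simp

lemma penalty_min_first_order:
  fixes G :: "'i \<Rightarrow> 'a \<Rightarrow> real" and seg :: "'a \<Rightarrow> 'a \<Rightarrow> real \<Rightarrow> 'a"
  assumes seg_in: "\<And>t. 0 \<le> t \<Longrightarrow> t \<le> 1 \<Longrightarrow> seg X\<^sub>0 Y t \<in> K"
    and seg_affine: "\<And>i t. i \<in> I \<Longrightarrow> G i (seg X\<^sub>0 Y t) = (1 - t) * G i X\<^sub>0 + t * G i Y"
    and min: "\<And>X. X \<in> K \<Longrightarrow> (\<Sum>i\<in>I. (max 0 (G i X\<^sub>0 - q))\<^sup>2) \<le> (\<Sum>i\<in>I. (max 0 (G i X - q))\<^sup>2)"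
  shows "(\<Sum>i\<in>I. max 0 (G i X\<^sub>0 - q) * G i X\<^sub>0) \<le> (\<Sum>i\<in>I. max 0 (G i X\<^sub>0 - q) * G i Y)"
proof -
  define p where "p i = max 0 (G i X\<^sub>0 - q)" for i
  define d where "d i = G i Y - G i X\<^sub>0" for i
  have "0 \<le> 2 * (\<Sum>i\<in>I. p i * d i) + t * (\<Sum>i\<in>I. (d i)\<^sup>2)" if t: "0 < t" "t \<le> 1" for t
  proof -
    have "(\<Sum>i\<in>I. (p i)\<^sup>2) \<le> (\<Sum>i\<in>I. (max 0 (G i (seg X\<^sub>0 Y t) - q))\<^sup>2)"
      unfolding p_def using t by (intro min seg_in) simp_all
    also have "\<dots> = (\<Sum>i\<in>I. (max 0 ((G i X\<^sub>0 - q) + t * d i))\<^sup>2)"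
      by (intro sum.cong refl) (simp add: seg_affine d_def algebra_simps)
    also have "\<dots> \<le> (\<Sum>i\<in>I. (p i)\<^sup>2 + 2 * p i * (t * d i) + (t * d i)\<^sup>2)"
      unfolding p_def by (intro sum_mono pos_part_square_le)
    also have "\<dots> = (\<Sum>i\<in>I. (p i)\<^sup>2) + t * (2 * (\<Sum>i\<in>I. p i * d i) + t * (\<Sum>i\<in>I. (d i)\<^sup>2))"
      by (simp add: sum.distrib sum_distrib_left power_mult_distrib power2_eq_square
          distrib_left mult.assoc mult.left_commute)
    finally have "0 \<le> t * (2 * (\<Sum>i\<in>I. p i * d i) + t * (\<Sum>i\<in>I. (d i)\<^sup>2))"
      by simp
    with t show ?thesis by (simp add: zero_le_mult_iff)
  qed
  then have "0 \<le> 2 * (\<Sum>i\<in>I. p i * d i)" by (rule nonneg_if_nonneg_at_right)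
  then show ?thesis by (simp add: p_def d_def algebra_simps sum_subtractf)
qed

text \<open>The weights are the normalised positive parts \<open>max 0 (G i X\<^sub>0 - (v - \<epsilon>))\<close> at a
  minimiser \<open>X\<^sub>0\<close> of the penalty \<open>\<Sum>i\<in>I. (max 0 (G i X - (v - \<epsilon>)))\<^sup>2\<close> on \<open>K\<close>.\<close>

lemma finite_minimax_approx:
  fixes K :: "'a::topological_space set" and G :: "'i \<Rightarrow> 'a \<Rightarrow> real"
    and seg :: "'a \<Rightarrow> 'a \<Rightarrow> real \<Rightarrow> 'a"
  assumes "finite I" "compact K" "K \<noteq> {}"
    and seg_in: "\<And>X Y t. X \<in> K \<Longrightarrow> Y \<in> K \<Longrightarrow> 0 \<le> t \<Longrightarrow> t \<le> 1 \<Longrightarrow> seg X Y t \<in> K"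
    and seg_affine: "\<And>i X Y t. i \<in> I \<Longrightarrow> G i (seg X Y t) = (1 - t) * G i X + t * G i Y"
    and cont: "\<And>i. i \<in> I \<Longrightarrow> continuous_on K (G i)"
    and some_large: "\<And>X. X \<in> K \<Longrightarrow> \<exists>i\<in>I. v \<le> G i X"
    and "0 < \<epsilon>"
  shows "\<exists>a. (\<forall>i\<in>I. 0 \<le> a i) \<and> sum a I = 1 \<and> (\<forall>X\<in>K. v - \<epsilon> \<le> (\<Sum>i\<in>I. a i * G i X))"
proof -
  define q where "q = v - \<epsilon>"
  have "continuous_on K (\<lambda>X. \<Sum>i\<in>I. (max 0 (G i X - q))\<^sup>2)"
    by (intro continuous_intros cont)
  then obtain X\<^sub>0 where "X\<^sub>0 \<in> K" and min: "\<And>X. X \<in> K \<Longrightarrow>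
      (\<Sum>i\<in>I. (max 0 (G i X\<^sub>0 - q))\<^sup>2) \<le> (\<Sum>i\<in>I. (max 0 (G i X - q))\<^sup>2)"
    using continuous_attains_inf[OF assms(2,3)] by blast
  define p where "p i = max 0 (G i X\<^sub>0 - q)" for i
  obtain i\<^sub>0 where "i\<^sub>0 \<in> I" "v \<le> G i\<^sub>0 X\<^sub>0" using some_large[OF \<open>X\<^sub>0 \<in> K\<close>] by blast
  then have "0 < p i\<^sub>0" using \<open>0 < \<epsilon>\<close> by (simp add: p_def q_def)
  also have "p i\<^sub>0 \<le> sum p I"
    using \<open>i\<^sub>0 \<in> I\<close> assms(1) by (intro member_le_sum) (auto simp: p_def)
  finally have p_pos: "0 < sum p I" .
  have "q * sum p I \<le> (\<Sum>i\<in>I. p i * G i X)" if "X \<in> K" for X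
  proof -
    have "q * sum p I \<le> (\<Sum>i\<in>I. p i * G i X\<^sub>0)"
      unfolding sum_distrib_left
      by (intro sum_mono) (auto simp: p_def max_def mult.commute intro!: mult_right_mono)
    also have "\<dots> \<le> (\<Sum>i\<in>I. p i * G i X)"
      unfolding p_def using \<open>X\<^sub>0 \<in> K\<close> that
      by (intro penalty_min_first_order[where K = K and seg = seg] seg_in seg_affine min)
    finally show ?thesis .
  qed
  then show ?thesis using p_pos
    by (intro exI[of _ "\<lambda>i. p i / sum p I"])
      (auto simp: p_def q_def le_divide_eq mult.commute simp flip: sum_divide_distrib)
qed

lemma continuous_on_Max_image:
  fixes f :: "'i \<Rightarrow> 'a::topological_space \<Rightarrow> real"
  assumes "finite I" "I \<noteq> {}" "\<And>i. i \<in> I \<Longrightarrow> continuous_on S (f i)"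
  shows "continuous_on S (\<lambda>x. Max ((\<lambda>i. f i x) ` I))"
  using assms
proof (induction I rule: finite_ne_induct)
  case (singleton i)
  then show ?case by simp
next
  case (insert i I)
  then have "continuous_on S (\<lambda>x. max (f i x) (Max ((\<lambda>i. f i x) ` I)))"
    by (intro continuous_on_max) auto
  with insert.hyps show ?case by simp
qed

locale multiplex_budget =
  fixes N :: nat and E1 E2 :: "(nat \<times> nat) set" and c :: real
  assumes N_pos: "1 \<le> N" and budget_nonneg: "0 \<le> c"
    and E1_sub: "E1 \<subseteq> {(i, j). 1 \<le> i \<and> i < j \<and> j \<le> N}"
    and E2_sub: "E2 \<subseteq> {(i, j). N + 1 \<le> i \<and> i < j \<and> j \<le> 2 * N}"
begin

lemma edges_in_range: "E1 \<union> E2 \<subseteq> {1..2 * N} \<times> {1..2 * N}"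
  using E1_sub E2_sub by auto

definition laplacian :: "(nat \<Rightarrow> real) \<Rightarrow> nat \<Rightarrow> nat \<Rightarrow> real" where
  "laplacian w = (\<lambda>a b. (\<Sum>i\<in>{1..N}. w i * Lij i (N + i) a b) + L0 E1 E2 a b)"

lemma quad_form_laplacian:
  "quad_form {1..2 * N} (laplacian w) x
     = (\<Sum>i\<in>{1..N}. w i * (x i - x (N + i))\<^sup>2) + (\<Sum>(i, j)\<in>E1 \<union> E2. (x i - x j)\<^sup>2)"
proof -
  have "L0 E1 E2 = (\<lambda>a b. \<Sum>e\<in>E1 \<union> E2. Lij (fst e) (snd e) a b)"
    by (simp add: L0_def split_def)
  then have "quad_form {1..2 * N} (L0 E1 E2) x
      = (\<Sum>e\<in>E1 \<union> E2. quad_form {1..2 * N} (Lij (fst e) (snd e)) x)"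
    by (simp add: quad_form_sum)
  also have "\<dots> = (\<Sum>(i, j)\<in>E1 \<union> E2. (x i - x j)\<^sup>2)"
    unfolding split_def
  proof (rule sum.cong[OF refl])
    fix e assume "e \<in> E1 \<union> E2"
    then have "fst e \<in> {1..2 * N}" "snd e \<in> {1..2 * N}" using edges_in_range by auto
    then show "quad_form {1..2 * N} (Lij (fst e) (snd e)) x = (x (fst e) - x (snd e))\<^sup>2"
      by (rule quad_form_Lij)
  qed
  moreover have "quad_form {1..2 * N} (Lij i (N + i)) x = (x i - x (N + i))\<^sup>2" if "i \<in> {1..N}" for i
    using that by (intro quad_form_Lij) auto
  ultimately show ?thesis
    unfolding laplacian_def quad_form_add quad_form_sum quad_form_scale by simp
qed

lemma laplacian_sym: "laplacian w a b = laplacian w b a"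
  by (simp add: laplacian_def L0_def Lij_def mult.commute)

lemma primal_feasible_of_dual_bound:
  assumes "\<forall>i\<in>{1..N}. 0 \<le> w i" "sum w {1..N} = c"
    and bound: "\<forall>X\<in>dual_spectrahedron (2 * N). lam \<le> inner_mat (2 * N) X (laplacian w)"
  shows "primal_feasible N E1 E2 c w lam \<bar>lam\<bar>"
proof -
  let ?M = "\<lambda>a b. laplacian w a b + \<bar>lam\<bar> * ones_mat a b - lam * id_mat a b"
  have "quad_form {1..2 * N} (laplacian w) (\<lambda>a. x a - \<alpha>) = quad_form {1..2 * N} (laplacian w) x"
    for x \<alpha> unfolding quad_form_laplacian by simp
  then have "0 \<le> quad_form {1..2 * N} ?M x" for x
    using N_pos rayleigh_bound_on_centered[OF bound] by (intro psd_shift_by_ones) simp_all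
  moreover have "?M a b = ?M b a" for a b
    using laplacian_sym[of w a b] by (simp add: ones_mat_def id_mat_def)
  ultimately have "psd (2 * N) ?M" by (simp add: psd_eq_psd_on psd_on_def)
  with assms(1,2) show ?thesis
    by (simp add: primal_feasible_def laplacian_def add.assoc)
qed

text \<open>Minus the dual objective at \<open>X\<close> for the best multiplier, which is
  \<open>\<xi> = - max\<^sub>i \<langle>X, Lij i (N + i)\<rangle>\<close>.\<close>

definition dual_value :: "(nat \<Rightarrow> nat \<Rightarrow> real) \<Rightarrow> real" where
  "dual_value X = inner_mat (2 * N) X (L0 E1 E2)
     + c * Max ((\<lambda>i. inner_mat (2 * N) X (Lij i (N + i))) ` {1..N})"

lemma continuous_on_dual_value: "continuous_on S dual_value"
  unfolding dual_value_def using N_pos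
  by (intro continuous_intros continuous_on_Max_image) auto

lemma dual_feasible_of_dual_spectrahedron:
  assumes "X \<in> dual_spectrahedron (2 * N)"
  shows "\<exists>xi. dual_feasible N xi X \<and> dual_obj N E1 E2 c xi X = - dual_value X"
proof -
  define m where "m = Max ((\<lambda>i. inner_mat (2 * N) X (Lij i (N + i))) ` {1..N})"
  have "\<forall>i\<in>{1..N}. inner_mat (2 * N) X (Lij i (N + i)) \<le> m"
    unfolding m_def by (intro ballI Max_ge) auto
  then have "dual_feasible N (- m) X"
    using assms by (simp add: dual_feasible_def dual_spectrahedron_def)
  moreover have "dual_obj N E1 E2 c (- m) X = - dual_value X"
    by (simp add: dual_obj_def dual_value_def m_def)
  ultimately show ?thesis by blast
qed

lemma primal_feasible_near_dual_min:
  assumes min: "\<forall>X\<in>dual_spectrahedron (2 * N). p \<le> dual_value X" and "0 < \<epsilon>"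
  shows "\<exists>w. primal_feasible N E1 E2 c w (p - \<epsilon>) \<bar>p - \<epsilon>\<bar>"
proof -
  let ?K = "dual_spectrahedron (2 * N)"
  define G where "G i X = inner_mat (2 * N) X (L0 E1 E2) + c * inner_mat (2 * N) X (Lij i (N + i))"
    for i X
  have large: "\<exists>i\<in>{1..N}. p \<le> G i X" if "X \<in> ?K" for X
  proof -
    let ?f = "\<lambda>i. inner_mat (2 * N) X (Lij i (N + i))"
    have "Max (?f ` {1..N}) \<in> ?f ` {1..N}" using N_pos by (intro Max_in) auto
    then obtain i where "i \<in> {1..N}" "Max (?f ` {1..N}) = ?f i" by auto
    moreover have "p \<le> dual_value X" using min that by blast
    ultimately show ?thesis unfolding dual_value_def G_def by auto
  qed
  have "\<exists>a. (\<forall>i\<in>{1..N}. 0 \<le> a i) \<and> sum a {1..N} = 1 \<and>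
      (\<forall>X\<in>?K. p - \<epsilon> \<le> (\<Sum>i\<in>{1..N}. a i * G i X))"
  proof (rule finite_minimax_approx[where seg = mat_segment])
    show "?K \<noteq> {}" using N_pos by (intro dual_spectrahedron_nonempty) simp
    show "G i (mat_segment X Y t) = (1 - t) * G i X + t * G i Y" for i X Y t
      by (simp add: G_def inner_mat_mat_segment algebra_simps)
    show "continuous_on ?K (G i)" for i
      unfolding G_def by (intro continuous_intros)
  qed (use large \<open>0 < \<epsilon>\<close> compact_dual_spectrahedron mat_segment_in_dual_spectrahedron in auto)
  then obtain a where a: "\<forall>i\<in>{1..N}. 0 \<le> a i" "sum a {1..N} = 1"
    "\<forall>X\<in>?K. p - \<epsilon> \<le> (\<Sum>i\<in>{1..N}. a i * G i X)"
    by blast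
  define w where "w i = c * a i" for i
  have "inner_mat (2 * N) X (laplacian w)
      = (\<Sum>i\<in>{1..N}. w i * inner_mat (2 * N) X (Lij i (N + i)))
        + inner_mat (2 * N) X (L0 E1 E2)" for X
    by (simp add: laplacian_def inner_mat_add inner_mat_sum)
  then have "(\<Sum>i\<in>{1..N}. a i * G i X) = inner_mat (2 * N) X (laplacian w)" for X
    using a(2) by (simp add: G_def w_def sum.distrib algebra_simps flip: sum_distrib_right)
  then show ?thesis
    using a budget_nonneg
    by (intro exI primal_feasible_of_dual_bound) (auto simp: w_def simp flip: sum_distrib_left)
qed

lemma dual_value_attains_min:
  "\<exists>X\<^sub>0\<in>dual_spectrahedron (2 * N). \<forall>X\<in>dual_spectrahedron (2 * N). dual_value X\<^sub>0 \<le> dual_value X"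
  using N_pos
  by (intro continuous_attains_inf compact_dual_spectrahedron dual_spectrahedron_nonempty
      continuous_on_dual_value) simp

lemma strong_duality_at_dual_min:
  assumes "X\<^sub>0 \<in> dual_spectrahedron (2 * N)"
    and min: "\<forall>X\<in>dual_spectrahedron (2 * N). dual_value X\<^sub>0 \<le> dual_value X"
  defines "p \<equiv> dual_value X\<^sub>0"
  shows "(\<forall>w lam mu. primal_feasible N E1 E2 c w lam mu \<longrightarrow> lam \<le> p) \<and>
     (\<forall>\<epsilon>>0. \<exists>w lam mu. primal_feasible N E1 E2 c w lam mu \<and> p - \<epsilon> < lam) \<and>
     (\<exists>xi X. dual_feasible N xi X \<and> dual_obj N E1 E2 c xi X = - p) \<and>
     (\<forall>xi X. dual_feasible N xi X \<longrightarrow> dual_obj N E1 E2 c xi X \<le> - p)"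
proof -
  obtain xi\<^sub>0 where dual_opt: "dual_feasible N xi\<^sub>0 X\<^sub>0" "dual_obj N E1 E2 c xi\<^sub>0 X\<^sub>0 = - p"
    using dual_feasible_of_dual_spectrahedron[OF assms(1)] by (auto simp: p_def)
  have near: "\<exists>w. primal_feasible N E1 E2 c w (p - \<epsilon>) \<bar>p - \<epsilon>\<bar>" if "0 < \<epsilon>" for \<epsilon>
    using primal_feasible_near_dual_min min that by (simp add: p_def)
  show ?thesis
  proof (intro conjI allI impI)
    fix w lam mu
    assume "primal_feasible N E1 E2 c w lam mu"
    from weak_duality[OF this dual_opt(1)] show "lam \<le> p" by (simp add: dual_opt(2))
  next
    fix \<epsilon> :: real
    assume "0 < \<epsilon>"
    then obtain w where "primal_feasible N E1 E2 c w (p - \<epsilon> / 2) \<bar>p - \<epsilon> / 2\<bar>"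
      using near[of "\<epsilon> / 2"] by auto
    moreover have "p - \<epsilon> < p - \<epsilon> / 2" using \<open>0 < \<epsilon>\<close> by simp
    ultimately show "\<exists>w lam mu. primal_feasible N E1 E2 c w lam mu \<and> p - \<epsilon> < lam" by blast
  next
    show "\<exists>xi X. dual_feasible N xi X \<and> dual_obj N E1 E2 c xi X = - p" using dual_opt by blast
  next
    fix xi X
    assume dual: "dual_feasible N xi X"
    show "dual_obj N E1 E2 c xi X \<le> - p"
    proof (rule field_le_epsilon)
      fix \<epsilon> :: real
      assume "0 < \<epsilon>"
      with near obtain w where "primal_feasible N E1 E2 c w (p - \<epsilon>) \<bar>p - \<epsilon>\<bar>" by blast
      from weak_duality[OF this dual] show "dual_obj N E1 E2 c xi X \<le> - p + \<epsilon>" by simp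
    qed
  qed
qed

end

theorem proposition2:
  fixes N :: nat and E1 E2 :: "(nat \<times> nat) set" and c :: real
  assumes "1 \<le> N" and "0 \<le> c"
    and "E1 \<subseteq> {(i, j). 1 \<le> i \<and> i < j \<and> j \<le> N}"
    and "E2 \<subseteq> {(i, j). N + 1 \<le> i \<and> i < j \<and> j \<le> 2 * N}"
  shows "\<exists>p :: real.
     (\<forall>w lam mu. primal_feasible N E1 E2 c w lam mu \<longrightarrow> lam \<le> p) \<and>
     (\<forall>\<epsilon>>0. \<exists>w lam mu. primal_feasible N E1 E2 c w lam mu \<and> p - \<epsilon> < lam) \<and>
     (\<exists>xi X. dual_feasible N xi X \<and> dual_obj N E1 E2 c xi X = - p) \<and>
     (\<forall>xi X. dual_feasible N xi X \<longrightarrow> dual_obj N E1 E2 c xi X \<le> - p)"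
proof -
  interpret multiplex_budget N E1 E2 c using assms by unfold_locales
  obtain X\<^sub>0 where "X\<^sub>0 \<in> dual_spectrahedron (2 * N)"
    and "\<forall>X\<in>dual_spectrahedron (2 * N). dual_value X\<^sub>0 \<le> dual_value X"
    using dual_value_attains_min by blast
  from strong_duality_at_dual_min[OF this] show ?thesis by blast
qed

end
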